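(* Let $T$ be a tree on $[n]$ and $G$ a connected graph on $[n]$. Then $T(G)=T$ if and only if $G$ can be obtained from $T$ by adding some subset of the edges permitted by ${\bf oDFS}(T)$.
   Context: Ordered depth-first search. For a connected graph $G$ on $[n]$, ${\bf oDFS}(G)$ is the procedure: set $\mathcal O_0=(1)$ (an ordered list) and $\mathcal A_0=\emptyset$. For $i=0,1,\dots,n-1$: let $v_i$ be the first element of $\mathcal O_i$; let $\mathcal N_i$ be the set of neighbours of $v_i$ in $[n]\setminus(\mathcal A_i\cup\mathcal O_i)$; set $\mathcal A_{i+1}=\mathcal A_i\cup\{v_i\}$; form $\mathcal O_{i+1}$ by removing $v_i$ from the front of $\mathcal O_i$ and then placing the elements of $\mathcal N_i$, in increasing order, at the front. The depth-first tree $T(G)$ is the spanning tree of $G$ with edge set $\{v_iy:0\le i<n,\ y\in\mathcal N_i\}$. For a tree $T$ on $[n]$, an edge $uv\notin E(T)$ is permitted by ${\bf oDFS}(T)$ if there is $i$ with $u,v\in\mathcal O_i$ (stacks computed by running ${\bf oDFS}(T)$). *)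

theory Defs
  imports Main
begin

definition graph_on :: "nat \<Rightarrow> nat set set \<Rightarrow> bool" where
  "graph_on n E \<longleftrightarrow> (\<forall>e\<in>E. \<exists>u v. e = {u, v} \<and> u \<noteq> v \<and> u \<in> {1..n} \<and> v \<in> {1..n})"

definition adj :: "nat set set \<Rightarrow> (nat \<times> nat) set" where
  "adj E = {(u, v). {u, v} \<in> E}"

definition connected_on :: "nat \<Rightarrow> nat set set \<Rightarrow> bool" where
  "connected_on n E \<longleftrightarrow> graph_on n E \<and> (\<forall>u\<in>{1..n}. \<forall>v\<in>{1..n}. (u, v) \<in> (adj E)\<^sup>*)"

definition has_cycle :: "nat set set \<Rightarrow> bool" where
  "has_cycle E \<longleftrightarrow> (\<exists>vs. length vs \<ge> 3 \<and> distinct vs \<and>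
     (\<forall>i < length vs. {vs ! i, vs ! ((i + 1) mod length vs)} \<in> E))"

definition tree_on :: "nat \<Rightarrow> nat set set \<Rightarrow> bool" where
  "tree_on n E \<longleftrightarrow> connected_on n E \<and> \<not> has_cycle E"

text \<open>One step of oDFS on state (A_i, O_i). (If the stack is empty nothing happens;
  this never occurs for i < n on a connected graph.)\<close>
definition odfs_N :: "nat set set \<Rightarrow> nat set \<Rightarrow> nat list \<Rightarrow> nat \<Rightarrow> nat set" where
  "odfs_N E A Os v = {y. {v, y} \<in> E \<and> y \<notin> A \<and> y \<notin> set Os}"

fun odfs_step :: "nat set set \<Rightarrow> nat set \<times> nat list \<Rightarrow> nat set \<times> nat list" where
  "odfs_step E (A, []) = (A, [])"
| "odfs_step E (A, v # rest) =
     (insert v A, sorted_list_of_set (odfs_N E A (v # rest) v) @ rest)"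

definition odfs_state :: "nat set set \<Rightarrow> nat \<Rightarrow> nat set \<times> nat list" where
  "odfs_state E i = (odfs_step E ^^ i) ({}, [1])"

definition odfs_A :: "nat set set \<Rightarrow> nat \<Rightarrow> nat set" where
  "odfs_A E i = fst (odfs_state E i)"

definition odfs_O :: "nat set set \<Rightarrow> nat \<Rightarrow> nat list" where
  "odfs_O E i = snd (odfs_state E i)"

definition odfs_v :: "nat set set \<Rightarrow> nat \<Rightarrow> nat" where
  "odfs_v E i = hd (odfs_O E i)"

definition odfs_Ni :: "nat set set \<Rightarrow> nat \<Rightarrow> nat set" where
  "odfs_Ni E i = odfs_N E (odfs_A E i) (odfs_O E i) (odfs_v E i)"

definition dfs_tree :: "nat \<Rightarrow> nat set set \<Rightarrow> nat set set" where
  "dfs_tree n E = {{odfs_v E i, y} | i y. i < n \<and> y \<in> odfs_Ni E i}"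

definition permitted :: "nat \<Rightarrow> nat set set \<Rightarrow> nat set set" where
  "permitted n T = {{u, v} | u v. u \<noteq> v \<and> {u, v} \<notin> T \<and>
      (\<exists>i \<le> n. u \<in> set (odfs_O T i) \<and> v \<in> set (odfs_O T i))}"

end

theory Submission imports Defs "HOL-Library.Transitive_Closure_Table" begin

(* Write A_i, O_i, v_i, N_i for the data of the oDFS run on a graph E.
   First we collect facts about a single run on a graph on [n]: the stack and the
   explored set stay disjoint, explored vertices have all their neighbours explored or
   stacked, and on a connected graph every vertex is some v_i with i < n.  From these:
   (a) every vertex is joined to 1 inside the depth-first tree, so for a tree T every
       edge of T missing from T(T) would close a cycle; hence T(T) = T;
   (b) every edge of E is a tree edge of T(E) or has both endpoints on a common stack O_i.
   Finally, two runs on T <= G coincide as long as every vertex discovered in G is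
   discovered along an edge of T.  If T(G) = T this holds trivially, and then (b) shows
   that the extra edges of G are permitted.  Conversely a permitted edge never leads from
   v_k to an unseen vertex, so adding permitted edges does not change the run, and
   T(G) = T(T) = T by (a). *)

section \<open>The oDFS run on a single graph\<close>

lemma odfs_state_Suc:
  "odfs_state E (Suc i) =
     (if odfs_O E i = [] then odfs_state E i
      else (insert (odfs_v E i) (odfs_A E i), sorted_list_of_set (odfs_Ni E i) @ tl (odfs_O E i)))"
proof -
  have step: "odfs_state E (Suc i) = odfs_step E (odfs_state E i)"
    by (simp add: odfs_state_def)
  obtain A Os where st: "odfs_state E i = (A, Os)" by (cases "odfs_state E i")
  show ?thesis
    by (cases Os) (simp_all add: step st odfs_A_def odfs_O_def odfs_v_def odfs_Ni_def)
qed

lemma odfs_A_0: "odfs_A E 0 = {}" and odfs_O_0: "odfs_O E 0 = [1]"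
  by (simp_all add: odfs_A_def odfs_O_def odfs_state_def)

lemma odfs_A_Suc:
  "odfs_A E (Suc i) = (if odfs_O E i = [] then odfs_A E i else insert (odfs_v E i) (odfs_A E i))"
  by (simp add: odfs_A_def odfs_state_Suc[of E i, folded odfs_A_def odfs_O_def])

lemma odfs_O_Suc:
  "odfs_O E (Suc i) = (if odfs_O E i = [] then [] else sorted_list_of_set (odfs_Ni E i) @ tl (odfs_O E i))"
  by (simp add: odfs_O_def odfs_state_Suc[of E i, folded odfs_A_def odfs_O_def])

lemma odfs_v_in_O: "odfs_O E i \<noteq> [] \<Longrightarrow> odfs_v E i \<in> set (odfs_O E i)"
  by (simp add: odfs_v_def)

lemma odfs_Ni_iff:
  "y \<in> odfs_Ni E i \<longleftrightarrow> {odfs_v E i, y} \<in> E \<and> y \<notin> odfs_A E i \<and> y \<notin> set (odfs_O E i)"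
  by (simp add: odfs_Ni_def odfs_N_def)

text \<open>On a graph on [n] newly discovered vertices lie in [n]; in particular these sets are
  finite, so sorting them loses nothing.\<close>
lemma odfs_Ni_vertices: "graph_on n E \<Longrightarrow> odfs_Ni E i \<subseteq> {1..n}"
  unfolding graph_on_def odfs_Ni_def odfs_N_def by (auto simp: doubleton_eq_iff)

lemma odfs_Ni_finite: "graph_on n E \<Longrightarrow> finite (odfs_Ni E i)"
  by (rule finite_subset[OF odfs_Ni_vertices]) simp_all

lemma odfs_invariant:
  assumes g: "graph_on n E" and n: "n \<ge> 1"
  shows "finite (odfs_A E i) \<and> odfs_A E i \<union> set (odfs_O E i) \<subseteq> {1..n} \<and> distinct (odfs_O E i)
     \<and> odfs_A E i \<inter> set (odfs_O E i) = {} \<and> 1 \<in> odfs_A E i \<union> set (odfs_O E i)"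
proof (induction i)
  case 0
  then show ?case using n by (simp add: odfs_A_0 odfs_O_0)
next
  case (Suc i)
  have sub: "odfs_Ni E i \<subseteq> {1..n}" using odfs_Ni_vertices[OF g] .
  show ?case
  proof (cases "odfs_O E i")
    case Nil
    then show ?thesis using Suc by (simp add: odfs_A_Suc odfs_O_Suc)
  next
    case (Cons v rest)
    then show ?thesis
      using Suc sub odfs_Ni_finite[OF g, of i] odfs_Ni_iff[of _ E i]
      by (simp add: odfs_A_Suc odfs_O_Suc odfs_v_def) auto
  qed
qed

lemma odfs_A_disjoint_O:
  "graph_on n E \<Longrightarrow> n \<ge> 1 \<Longrightarrow> x \<in> odfs_A E i \<Longrightarrow> x \<notin> set (odfs_O E i)"
  using odfs_invariant by blast

lemma odfs_explored_closed:
  assumes g: "graph_on n E"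
  shows "x \<in> odfs_A E i \<Longrightarrow> {x, y} \<in> E \<Longrightarrow> y \<in> odfs_A E i \<union> set (odfs_O E i)"
proof (induction i)
  case 0
  then show ?case by (simp add: odfs_A_0)
next
  case (Suc i)
  then show ?case
    using odfs_Ni_finite[OF g, of i] odfs_Ni_iff[of y E i]
    by (cases "odfs_O E i") (auto simp: odfs_A_Suc odfs_O_Suc odfs_v_def)
qed

lemma odfs_mono:
  assumes "i \<le> j"
  shows "odfs_A E i \<subseteq> odfs_A E j \<and> odfs_A E i \<union> set (odfs_O E i) \<subseteq> odfs_A E j \<union> set (odfs_O E j)
     \<and> (odfs_O E i = [] \<longrightarrow> odfs_O E j = [])"
  using assms
proof (induction j)
  case (Suc j)
  have step: "odfs_A E j \<subseteq> odfs_A E (Suc j)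
      \<and> odfs_A E j \<union> set (odfs_O E j) \<subseteq> odfs_A E (Suc j) \<union> set (odfs_O E (Suc j))
      \<and> (odfs_O E j = [] \<longrightarrow> odfs_O E (Suc j) = [])"
    by (cases "odfs_O E j") (auto simp: odfs_A_Suc odfs_O_Suc odfs_v_def)
  show ?case
  proof (cases "i = Suc j")
    case False
    with Suc step show ?thesis by (meson le_SucE order_trans)
  qed simp
qed simp

lemma odfs_v_explored_later: "odfs_O E k \<noteq> [] \<Longrightarrow> k < i \<Longrightarrow> odfs_v E k \<in> odfs_A E i"
  using odfs_mono[of "Suc k" i E] by (auto simp: odfs_A_Suc)

lemma odfs_A_elem: "x \<in> odfs_A E i \<Longrightarrow> \<exists>k<i. odfs_O E k \<noteq> [] \<and> x = odfs_v E k"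
proof (induction i)
  case (Suc i)
  then show ?case by (auto simp: odfs_A_Suc split: if_splits intro: less_SucI)
qed (simp add: odfs_A_0)

lemma odfs_card_A:
  assumes g: "graph_on n E" and n: "n \<ge> 1"
  shows "(\<forall>k<i. odfs_O E k \<noteq> []) \<Longrightarrow> card (odfs_A E i) = i"
proof (induction i)
  case (Suc i)
  then have ne: "odfs_O E i \<noteq> []" by simp
  then have "odfs_v E i \<notin> odfs_A E i"
    using odfs_A_disjoint_O[OF g n] odfs_v_in_O by blast
  then show ?case using Suc odfs_invariant[OF g n, of i] ne by (simp add: odfs_A_Suc)
qed (simp add: odfs_A_0)

text \<open>On a connected graph the stack does not empty before all n vertices are explored:
  an empty stack means the explored set is closed under adjacency, hence all of [n].\<close>
lemma odfs_stack_nonempty: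
  assumes c: "connected_on n E" and n: "n \<ge> 1"
  shows "i < n \<Longrightarrow> odfs_O E i \<noteq> []"
proof (induction i rule: less_induct)
  case (less i)
  have g: "graph_on n E" using c connected_on_def by blast
  show ?case
  proof
    assume empty: "odfs_O E i = []"
    have card: "card (odfs_A E i) = i" using odfs_card_A[OF g n] less by auto
    have I: "finite (odfs_A E i) \<and> odfs_A E i \<subseteq> {1..n} \<and> 1 \<in> odfs_A E i"
      using odfs_invariant[OF g n, of i] empty by auto
    have "(1, u) \<in> (adj E)\<^sup>* \<Longrightarrow> u \<in> odfs_A E i" for u
    proof (induction rule: rtrancl_induct)
      case (step x y)
      then show ?case using odfs_explored_closed[OF g, of x i y] empty by (auto simp: adj_def)
    qed (use I in simp)
    then have "{1..n} \<subseteq> odfs_A E i" using c n unfolding connected_on_def by auto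
    then have "odfs_A E i = {1..n}" using I by auto
    then show False using card less by simp
  qed
qed

lemma odfs_A_n:
  assumes c: "connected_on n E" and n: "n \<ge> 1"
  shows "odfs_A E n = {1..n}"
proof -
  have g: "graph_on n E" using c connected_on_def by blast
  have "card (odfs_A E n) = n" using odfs_card_A[OF g n] odfs_stack_nonempty[OF c n] by auto
  then show ?thesis using odfs_invariant[OF g n, of n] by (simp add: card_subset_eq)
qed

lemma odfs_visits:
  assumes "connected_on n E" and "n \<ge> 1" and "u \<in> {1..n}"
  shows "\<exists>i<n. odfs_O E i \<noteq> [] \<and> u = odfs_v E i"
  using odfs_A_n[OF assms(1,2)] odfs_A_elem assms(3) by blast

section \<open>The depth-first tree\<close>

lemma dfs_tree_subset: "dfs_tree n E \<subseteq> E"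
  unfolding dfs_tree_def using odfs_Ni_iff by blast

lemma adj_rtrancl_mono: "F \<subseteq> F' \<Longrightarrow> (adj F)\<^sup>* \<subseteq> (adj F')\<^sup>*"
  by (rule rtrancl_mono) (auto simp: adj_def)

lemma dfs_tree_reaches_seen:
  assumes g: "graph_on n E"
  shows "x \<in> odfs_A E i \<union> set (odfs_O E i) \<Longrightarrow> (1, x) \<in> (adj (dfs_tree i E))\<^sup>*"
proof (induction i arbitrary: x)
  case 0
  then show ?case by (simp add: odfs_A_0 odfs_O_0)
next
  case (Suc i)
  have grow: "(adj (dfs_tree i E))\<^sup>* \<subseteq> (adj (dfs_tree (Suc i) E))\<^sup>*"
    by (rule adj_rtrancl_mono) (unfold dfs_tree_def, use less_SucI in blast)
  show ?case
  proof (cases "odfs_O E i \<noteq> [] \<and> x \<in> odfs_Ni E i")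
    case True
    then have "(1, odfs_v E i) \<in> (adj (dfs_tree i E))\<^sup>*" using Suc.IH odfs_v_in_O by blast
    moreover have "(odfs_v E i, x) \<in> adj (dfs_tree (Suc i) E)"
      using True unfolding adj_def dfs_tree_def by blast
    ultimately show ?thesis using grow by (meson rtrancl.rtrancl_into_rtrancl subsetD)
  next
    case False
    then have "x \<in> odfs_A E i \<union> set (odfs_O E i)"
      using Suc.prems odfs_Ni_finite[OF g, of i]
      by (cases "odfs_O E i") (auto simp: odfs_A_Suc odfs_O_Suc odfs_v_def)
    then show ?thesis using Suc.IH grow by blast
  qed
qed

lemma dfs_tree_connects:
  assumes c: "connected_on n E" and n: "n \<ge> 1" and ab: "a \<in> {1..n}" "b \<in> {1..n}"
  shows "(a, b) \<in> (adj (dfs_tree n E))\<^sup>*"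
proof -
  have g: "graph_on n E" using c connected_on_def by blast
  have root: "(1, x) \<in> (adj (dfs_tree n E))\<^sup>*" if "x \<in> {1..n}" for x
    using dfs_tree_reaches_seen[OF g] odfs_A_n[OF c n] that by blast
  have "sym ((adj (dfs_tree n E))\<^sup>*)"
    by (rule sym_rtrancl) (auto simp: sym_def adj_def insert_commute)
  then have "(a, 1) \<in> (adj (dfs_tree n E))\<^sup>*" using root[OF ab(1)] by (rule symD)
  then show ?thesis using root[OF ab(2)] by (rule rtrancl_trans)
qed

lemma rtrancl_path_nth:
  "rtrancl_path r x xs y \<Longrightarrow> (\<forall>i<length xs. r ((x # xs) ! i) (xs ! i)) \<and> last (x # xs) = y"
  by (induction rule: rtrancl_path.induct) (auto simp: less_Suc_eq_0_disj)

lemma cycle_from_path: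
  assumes e: "{a, b} \<in> E" and ab: "a \<noteq> b" and F: "F \<subseteq> E" "{a, b} \<notin> F"
    and p: "(b, a) \<in> (adj F)\<^sup>*"
  shows "has_cycle E"
proof -
  let ?r = "\<lambda>u v. (u, v) \<in> adj F"
  have "?r\<^sup>*\<^sup>* b a" using p by (simp add: rtranclp_rtrancl_eq)
  then obtain xs where "rtrancl_path ?r b xs a" using rtranclp_eq_rtrancl_path by metis
  then obtain ys where P: "rtrancl_path ?r b ys a" and d: "distinct (b # ys)"
    using rtrancl_path_distinct by metis
  note path = rtrancl_path_nth[OF P]
  have "ys \<noteq> []" using path ab by auto
  have len: "length ys \<ge> 2"
  proof (rule ccontr)
    assume "\<not> ?thesis"
    then obtain z where "ys = [z]" using \<open>ys \<noteq> []\<close> by (cases ys) (auto simp: Suc_le_eq)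
    then have "{b, a} \<in> F" using path by (auto simp: adj_def)
    then show False using F by (simp add: insert_commute)
  qed
  let ?vs = "b # ys"
  have "{?vs ! i, ?vs ! ((i + 1) mod length ?vs)} \<in> E" if i: "i < length ?vs" for i
  proof (cases "i < length ys")
    case True
    then have "(?vs ! i, ys ! i) \<in> adj F" using path by blast
    then show ?thesis using True F by (auto simp: adj_def)
  next
    case False
    then have "i = length ys" using i by simp
    then have "?vs ! i = a" and "(i + 1) mod length ?vs = 0"
      using path \<open>ys \<noteq> []\<close> by (simp_all add: last_conv_nth)
    then show ?thesis using e by (simp add: insert_commute)
  qed
  then show ?thesis unfolding has_cycle_def using d len by (intro exI[of _ ?vs]) auto
qed

text \<open>A tree is its own depth-first tree: an edge of T missed by the search would close
  a cycle with the path joining its endpoints in T(T).\<close>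
lemma dfs_tree_of_tree:
  assumes n: "n \<ge> 1" and t: "tree_on n T"
  shows "dfs_tree n T = T"
proof
  show "dfs_tree n T \<subseteq> T" by (rule dfs_tree_subset)
  have c: "connected_on n T" using t tree_on_def by blast
  show "T \<subseteq> dfs_tree n T"
  proof (rule ccontr)
    assume "\<not> T \<subseteq> dfs_tree n T"
    then obtain f where f: "f \<in> T" "f \<notin> dfs_tree n T" by blast
    moreover have "graph_on n T" using c connected_on_def by blast
    ultimately obtain a b where "f = {a, b}" "a \<noteq> b" "a \<in> {1..n}" "b \<in> {1..n}"
      unfolding graph_on_def by blast
    with f have e: "{a, b} \<in> T" "{a, b} \<notin> dfs_tree n T" "a \<noteq> b" "a \<in> {1..n}" "b \<in> {1..n}"
      by simp_all
    have "has_cycle T"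
      by (rule cycle_from_path[OF e(1,3) dfs_tree_subset e(2)]) (rule dfs_tree_connects[OF c n e(5,4)])
    then show False using t tree_on_def by blast
  qed
qed

section \<open>Edges of a graph relative to its depth-first run\<close>

lemma edge_to_later_vertex:
  assumes g: "graph_on n E" and n: "n \<ge> 1" and e: "{odfs_v E i, odfs_v E k} \<in> E"
    and ne: "odfs_O E i \<noteq> []" "odfs_O E k \<noteq> []" and ik: "i < k"
  shows "odfs_v E k \<in> odfs_Ni E i \<or> odfs_v E k \<in> set (tl (odfs_O E i))"
proof -
  let ?b = "odfs_v E k"
  have "odfs_v E i \<in> odfs_A E (Suc i)" using ne by (simp add: odfs_A_Suc)
  then have seen: "?b \<in> odfs_A E (Suc i) \<union> set (odfs_O E (Suc i))"
    using odfs_explored_closed[OF g] e by blast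
  have "?b \<notin> odfs_A E (Suc i)"
    using odfs_mono[of "Suc i" k E] ik odfs_A_disjoint_O[OF g n] odfs_v_in_O[OF ne(2)] by auto
  then show ?thesis using seen ne odfs_Ni_finite[OF g, of i] by (simp add: odfs_O_Suc)
qed

lemma edge_dichotomy:
  assumes c: "connected_on n E" and n: "n \<ge> 1" and e: "{a, b} \<in> E" "a \<noteq> b"
  shows "{a, b} \<in> dfs_tree n E \<or> (\<exists>i<n. a \<in> set (odfs_O E i) \<and> b \<in> set (odfs_O E i))"
proof -
  have g: "graph_on n E" using c connected_on_def by blast
  have ordered: "{odfs_v E i, odfs_v E k} \<in> dfs_tree n E
      \<or> (\<exists>j<n. odfs_v E i \<in> set (odfs_O E j) \<and> odfs_v E k \<in> set (odfs_O E j))"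
    if "{odfs_v E i, odfs_v E k} \<in> E" "odfs_O E i \<noteq> []" "odfs_O E k \<noteq> []" "i < k" "k < n" for i k
    using edge_to_later_vertex[OF g n that(1-4)]
  proof
    assume "odfs_v E k \<in> odfs_Ni E i"
    then show ?thesis unfolding dfs_tree_def using that(4,5) by (intro disjI1) force
  next
    assume "odfs_v E k \<in> set (tl (odfs_O E i))"
    then have "odfs_v E k \<in> set (odfs_O E i)" using that(2) by (meson list.set_sel(2))
    moreover have "i < n" using that(4,5) by simp
    ultimately show ?thesis using odfs_v_in_O[OF that(2)] by blast
  qed
  have "a \<in> {1..n}" "b \<in> {1..n}" using g e unfolding graph_on_def by (auto simp: doubleton_eq_iff)
  then obtain i k where i: "i < n" "odfs_O E i \<noteq> []" "a = odfs_v E i"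
    and k: "k < n" "odfs_O E k \<noteq> []" "b = odfs_v E k"
    using odfs_visits[OF c n, of a] odfs_visits[OF c n, of b] by blast
  then have "i \<noteq> k" using e(2) by auto
  then have "i < k \<or> k < i" by linarith
  then show ?thesis
  proof
    assume "i < k"
    then show ?thesis using ordered[of i k] e(1) i k by simp
  next
    assume "k < i"
    moreover have "{b, a} \<in> E" using e(1) by (simp only: insert_commute[of b a])
    ultimately have "{b, a} \<in> dfs_tree n E \<or> (\<exists>j<n. b \<in> set (odfs_O E j) \<and> a \<in> set (odfs_O E j))"
      using ordered[of k i] i k by simp
    then show ?thesis unfolding insert_commute[of b a] by blast
  qed
qed

text \<open>A permitted edge of T never leads from the explored vertex v_k to an unseen vertex:
  both endpoints lie on some stack O_j, and j > k is impossible since v_k leaves the stack.\<close>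
lemma permitted_edge_not_fresh:
  assumes g: "graph_on n T" and n: "n \<ge> 1" and p: "{odfs_v T k, y} \<in> permitted n T"
  shows "y \<in> odfs_A T k \<union> set (odfs_O T k)"
proof -
  obtain j where "j \<le> n" and on_j: "odfs_v T k \<in> set (odfs_O T j)" "y \<in> set (odfs_O T j)"
    using p unfolding permitted_def by (auto simp: doubleton_eq_iff)
  show ?thesis
  proof (cases "j \<le> k")
    case True
    then show ?thesis using odfs_mono[OF True, of T] on_j by blast
  next
    case False
    then have "odfs_O T k \<noteq> []" using odfs_mono[of k j T] on_j by auto
    then have "odfs_v T k \<in> odfs_A T j" using odfs_v_explored_later False by simp
    then show ?thesis using odfs_A_disjoint_O[OF g n] on_j by blast
  qed
qed

section \<open>Comparing the runs on T and on a supergraph G\<close>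

lemma odfs_runs_agree:
  assumes TG: "T \<subseteq> G"
    and only_T: "\<And>k y. k < m \<Longrightarrow> odfs_state G k = odfs_state T k \<Longrightarrow> y \<in> odfs_Ni G k \<Longrightarrow>
                   {odfs_v G k, y} \<in> T"
  shows "\<forall>i\<le>m. odfs_state G i = odfs_state T i" and "dfs_tree m G = dfs_tree m T"
proof -
  have parts: "odfs_A G k = odfs_A T k" "odfs_O G k = odfs_O T k" "odfs_v G k = odfs_v T k"
    if "odfs_state G k = odfs_state T k" for k
    using that by (simp_all add: odfs_A_def odfs_O_def odfs_v_def)
  have Ni: "odfs_Ni G k = odfs_Ni T k" if "k < m" "odfs_state G k = odfs_state T k" for k
    using only_T[OF that] TG parts[OF that(2)] by (auto simp: odfs_Ni_iff)
  have states: "odfs_state G i = odfs_state T i" if "i \<le> m" for i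
    using that
  proof (induction i)
    case (Suc i)
    then have "odfs_state G i = odfs_state T i" by simp
    then show ?case
      using Ni[of i] Suc.prems parts[of i] by (simp add: odfs_state_Suc[of G] odfs_state_Suc[of T])
  qed (simp add: odfs_state_def)
  then show "\<forall>i\<le>m. odfs_state G i = odfs_state T i" by blast
  have same: "odfs_Ni G k = odfs_Ni T k" "odfs_v G k = odfs_v T k" if "k < m" for k
    using Ni[OF that] parts states that by simp_all
  have as_union: "dfs_tree m E = (\<Union>k<m. (\<lambda>y. {odfs_v E k, y}) ` odfs_Ni E k)" for E
    by (auto simp: dfs_tree_def)
  show "dfs_tree m G = dfs_tree m T" unfolding as_union by (intro SUP_cong) (simp_all add: same)
qed

theorem lemma2:
  fixes n :: nat and T G :: "nat set set"
  assumes "n \<ge> 1"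
    and "tree_on n T"
    and "connected_on n G"
  shows "dfs_tree n G = T \<longleftrightarrow> (\<exists>S. S \<subseteq> permitted n T \<and> G = T \<union> S)"
proof
  assume dt: "dfs_tree n G = T"
  then have TG: "T \<subseteq> G" using dfs_tree_subset by blast
  have "\<forall>i\<le>n. odfs_state G i = odfs_state T i"
    by (rule odfs_runs_agree(1)[OF TG]) (auto simp: dt[symmetric] dfs_tree_def)
  then have stacks: "i < n \<Longrightarrow> odfs_O G i = odfs_O T i" for i by (simp add: odfs_O_def)
  have "G - T \<subseteq> permitted n T"
  proof
    fix e assume e: "e \<in> G - T"
    moreover have "graph_on n G" using assms(3) connected_on_def by blast
    ultimately obtain a b where ab: "e = {a, b}" "a \<noteq> b" unfolding graph_on_def by blast
    then obtain i where i: "i < n" "a \<in> set (odfs_O T i)" "b \<in> set (odfs_O T i)"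
      using edge_dichotomy[OF assms(3,1), of a b] e dt stacks by auto
    then show "e \<in> permitted n T"
      using ab e unfolding permitted_def by (blast intro: less_imp_le)
  qed
  then show "\<exists>S. S \<subseteq> permitted n T \<and> G = T \<union> S" using TG by (intro exI[of _ "G - T"]) auto
next
  assume "\<exists>S. S \<subseteq> permitted n T \<and> G = T \<union> S"
  then obtain S where S: "S \<subseteq> permitted n T" "G = T \<union> S" by blast
  have gT: "graph_on n T" using assms(2) unfolding tree_on_def connected_on_def by blast
  have "dfs_tree n G = dfs_tree n T"
  proof (rule odfs_runs_agree(2))
    fix k y assume st: "odfs_state G k = odfs_state T k" and y: "y \<in> odfs_Ni G k"
    then have "{odfs_v T k, y} \<in> G" "y \<notin> odfs_A T k \<union> set (odfs_O T k)"
      by (auto simp: odfs_Ni_iff odfs_A_def odfs_O_def odfs_v_def)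
    then show "{odfs_v G k, y} \<in> T"
      using S permitted_edge_not_fresh[OF gT assms(1)] st by (auto simp: odfs_v_def odfs_O_def)
  qed (use S in blast)
  then show "dfs_tree n G = T" using dfs_tree_of_tree[OF assms(1,2)] by simp
qed

end
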